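(* Let $n\ge1$, $q\ge2$ be integers and $\mu>0$. Let $\mathbf u_1,\dots,\mathbf u_{q-2},\tilde{\mathbf r},\tilde{\mathbf s}\in\mathbb R^n$ and set $\mathbf u_q=(W_{11}\tilde{\mathbf r}+W_{12}\tilde{\mathbf s})/\sqrt{m_2}$, $\mathbf u_{q-1}=(W_{21}\tilde{\mathbf r}+W_{22}\tilde{\mathbf s})/\sqrt{m_1}$, with $W$ as in the context. Let $\mathbf w_l=\sum_{m=1}^{q-2}\alpha_{m,l}\mathbf u_m$ for $l=1,\dots,q$. Then the quantities $G_l$ and $T$ defined in the context satisfy $$G_l=\mathbf w_l\cdot\mathbf w_l+2\sqrt{\frac1\mu+\frac{q}{q-1}}\;\mathbf w_l\cdot\tilde{\mathbf r},$$ $$T=\frac12\Big(1+\mu\frac{q}{q-1}\Big)^{-1}\Big[-\frac{q}{q-1}\Big(2+\mu\frac{q}{q-1}\Big)\tilde{\mathbf r}\cdot\tilde{\mathbf r}+\frac{q}{q-1}\tilde{\mathbf s}\cdot\tilde{\mathbf s}+\frac{2}{\sqrt\mu}\sqrt{\frac{q}{q-1}}\;\tilde{\mathbf r}\cdot\tilde{\mathbf s}\Big].$$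
   Context: For $j\in\{1,2\}$: $\lambda_j=\frac12\big((\mu-1)+(-1)^{j+1}\sqrt{\mu^2-(4q^{-1}-2)\mu+1}\big)$, $m_j=\lambda_j+1$, $x_j=1-qm_j$, $N_j=q-1+x_j^2$. For $m=1,\dots,q-2$, $l=1,\dots,q$: $\alpha_{m,l}=\frac{1}{\sqrt{m(m+1)}}$ if $l\le m$, $\frac{-m}{\sqrt{m(m+1)}}$ if $l=m+1$, $0$ if $l>m+1$. $$W=\frac{1}{\sqrt{\frac1\mu+\frac{q}{q-1}}}\begin{pmatrix}\frac{1/\sqrt{m_2}}{\sqrt{N_2}}&\frac{1/\sqrt{m_1}}{\sqrt{N_1}}\\[2pt]\frac{1/\sqrt{m_1}}{\sqrt{N_1}}&-\frac{1/\sqrt{m_2}}{\sqrt{N_2}}\end{pmatrix}.$$ $$G_l=\sum_{m,m'=1}^{q-2}\alpha_{m,l}\alpha_{m',l}\mathbf u_m\cdot\mathbf u_{m'}+\frac{2}{\sqrt{N_1}}\sum_{m=1}^{q-2}\alpha_{m,l}\mathbf u_m\cdot\mathbf u_{q-1}+\frac{2}{\sqrt{N_2}}\sum_{m=1}^{q-2}\alpha_{m,l}\mathbf u_m\cdot\mathbf u_q,$$ $$T=\frac{x_2^2-1}{2N_2}\mathbf u_q\cdot\mathbf u_q+\frac{x_1^2-1}{2N_1}\mathbf u_{q-1}\cdot\mathbf u_{q-1}+\frac{x_1x_2-1}{\sqrt{N_1}\sqrt{N_2}}\mathbf u_q\cdot\mathbf u_{q-1}.$$ *)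

theory Defs
  imports "HOL-Analysis.Analysis"
begin

definition lam :: "nat \<Rightarrow> real \<Rightarrow> nat \<Rightarrow> real" where
  "lam q \<mu> j = (1/2) * ((\<mu> - 1) + (-1) ^ (j + 1) *
      sqrt (\<mu>^2 - (4 / real q - 2) * \<mu> + 1))"

definition mm :: "nat \<Rightarrow> real \<Rightarrow> nat \<Rightarrow> real" where
  "mm q \<mu> j = lam q \<mu> j + 1"

definition xx :: "nat \<Rightarrow> real \<Rightarrow> nat \<Rightarrow> real" where
  "xx q \<mu> j = 1 - real q * mm q \<mu> j"

definition NN :: "nat \<Rightarrow> real \<Rightarrow> nat \<Rightarrow> real" where
  "NN q \<mu> j = real q - 1 + (xx q \<mu> j)^2"

definition alpha :: "nat \<Rightarrow> nat \<Rightarrow> real" where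
  "alpha m l = (if l \<le> m then 1 / sqrt (real m * (real m + 1))
               else if l = m + 1 then - real m / sqrt (real m * (real m + 1))
               else 0)"

definition cW :: "nat \<Rightarrow> real \<Rightarrow> real" where
  "cW q \<mu> = 1 / sqrt (1/\<mu> + real q / (real q - 1))"

definition W11 :: "nat \<Rightarrow> real \<Rightarrow> real" where
  "W11 q \<mu> = cW q \<mu> * ((1 / sqrt (mm q \<mu> 2)) / sqrt (NN q \<mu> 2))"
definition W12 :: "nat \<Rightarrow> real \<Rightarrow> real" where
  "W12 q \<mu> = cW q \<mu> * ((1 / sqrt (mm q \<mu> 1)) / sqrt (NN q \<mu> 1))"
definition W21 :: "nat \<Rightarrow> real \<Rightarrow> real" where
  "W21 q \<mu> = cW q \<mu> * ((1 / sqrt (mm q \<mu> 1)) / sqrt (NN q \<mu> 1))"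
definition W22 :: "nat \<Rightarrow> real \<Rightarrow> real" where
  "W22 q \<mu> = cW q \<mu> * (- (1 / sqrt (mm q \<mu> 2)) / sqrt (NN q \<mu> 2))"

definition GG :: "nat \<Rightarrow> real \<Rightarrow> (nat \<Rightarrow> real ^ 'n) \<Rightarrow> nat \<Rightarrow> real" where
  "GG q \<mu> u l =
     (\<Sum>m = 1..q-2. \<Sum>m' = 1..q-2. alpha m l * alpha m' l * (u m \<bullet> u m'))
     + 2 / sqrt (NN q \<mu> 1) * (\<Sum>m = 1..q-2. alpha m l * (u m \<bullet> u (q-1)))
     + 2 / sqrt (NN q \<mu> 2) * (\<Sum>m = 1..q-2. alpha m l * (u m \<bullet> u q))"

definition TT :: "nat \<Rightarrow> real \<Rightarrow> (nat \<Rightarrow> real ^ 'n) \<Rightarrow> real" where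
  "TT q \<mu> u =
     ((xx q \<mu> 2)^2 - 1) / (2 * NN q \<mu> 2) * (u q \<bullet> u q)
     + ((xx q \<mu> 1)^2 - 1) / (2 * NN q \<mu> 1) * (u (q-1) \<bullet> u (q-1))
     + (xx q \<mu> 1 * xx q \<mu> 2 - 1) / (sqrt (NN q \<mu> 1) * sqrt (NN q \<mu> 2)) * (u q \<bullet> u (q-1))"

end

theory Submission
  imports Defs
begin

(*
  With y\<^sub>1 = u\<^sub>q\<^sub>-\<^sub>1 / \<surd>N\<^sub>1 and y\<^sub>2 = u\<^sub>q / \<surd>N\<^sub>2 one has
  G\<^sub>l = w\<^sub>l \<bullet> w\<^sub>l + 2 w\<^sub>l \<bullet> (y\<^sub>1 + y\<^sub>2) and
  T = (|x\<^sub>1 y\<^sub>1 + x\<^sub>2 y\<^sub>2|\<^sup>2 - |y\<^sub>1 + y\<^sub>2|\<^sup>2) / 2 for arbitrary vectors.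
  Since m\<^sub>1, m\<^sub>2 are the roots of m\<^sup>2 - (\<mu> + 1) m + \<mu> / q, we get x\<^sub>1 x\<^sub>2 = 1 - q,
  x\<^sub>1 < 0 < x\<^sub>2 and N\<^sub>j = x\<^sub>j (x\<^sub>j - x\<^sub>3\<^sub>-\<^sub>j). In these terms substituting W gives
  y\<^sub>1 + y\<^sub>2 = \<surd>(1/\<mu> + q/(q-1)) r and
  x\<^sub>1 y\<^sub>1 + x\<^sub>2 y\<^sub>2 = c (r / \<mu> + \<surd>(q/(q-1)) s / \<surd>\<mu>), where c is the prefactor of W.
*)

lemma GG_eq_inner:
  fixes u :: "nat \<Rightarrow> real ^ 'n" and q l :: nat
  defines "w \<equiv> \<Sum>m = 1..q-2. alpha m l *\<^sub>R u m"
  shows "GG q \<mu> u l = w \<bullet> w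
    + 2 * (w \<bullet> ((1 / sqrt (NN q \<mu> 1)) *\<^sub>R u (q-1) + (1 / sqrt (NN q \<mu> 2)) *\<^sub>R u q))"
proof -
  have w_inner: "w \<bullet> v = (\<Sum>m = 1..q-2. alpha m l * (u m \<bullet> v))" for v
    by (simp add: w_def inner_sum_left)
  have "w \<bullet> w = (\<Sum>m = 1..q-2. alpha m l * (u m \<bullet> w))"
    by (rule w_inner)
  also have "\<dots> = (\<Sum>m = 1..q-2. \<Sum>m' = 1..q-2. alpha m l * alpha m' l * (u m \<bullet> u m'))"
    by (simp add: w_def inner_sum_right sum_distrib_left mult.assoc)
  finally show ?thesis
    by (simp add: GG_def w_inner algebra_simps)
qed

lemma inner_combination_diff:
  fixes y1 y2 :: "'a :: real_inner"
  shows "(x1 *\<^sub>R y1 + x2 *\<^sub>R y2) \<bullet> (x1 *\<^sub>R y1 + x2 *\<^sub>R y2) - (y1 + y2) \<bullet> (y1 + y2)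
    = (x1\<^sup>2 - 1) * (y1 \<bullet> y1) + (x2\<^sup>2 - 1) * (y2 \<bullet> y2) + 2 * (x1 * x2 - 1) * (y1 \<bullet> y2)"
  by (simp add: inner_commute[of y2 y1] power2_eq_square algebra_simps)

lemma quadratic_form_coefficients:
  fixes r s :: "'a :: real_inner" and \<mu> k :: real
  assumes \<mu>: "0 < \<mu>" and k: "0 < k"
  defines "c \<equiv> 1 / sqrt (1 / \<mu> + k)"
  defines "z \<equiv> c *\<^sub>R ((1 / \<mu>) *\<^sub>R r + (sqrt k / sqrt \<mu>) *\<^sub>R s)"
  shows "(z \<bullet> z - (sqrt (1 / \<mu> + k) *\<^sub>R r) \<bullet> (sqrt (1 / \<mu> + k) *\<^sub>R r)) / 2
    = (1/2) * inverse (1 + \<mu> * k) *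
      (- k * (2 + \<mu> * k) * (r \<bullet> r) + k * (s \<bullet> s) + 2 / sqrt \<mu> * sqrt k * (r \<bullet> s))"
proof -
  define t where "t = sqrt k / sqrt \<mu>"
  have pos: "0 < 1 / \<mu> + k" "0 < 1 + \<mu> * k" using \<mu> k by (simp_all add: add_pos_pos)
  have c2: "c\<^sup>2 = \<mu> / (1 + \<mu> * k)"
    using \<mu> pos by (simp add: c_def power_divide field_simps)
  have t2: "t\<^sup>2 = k / \<mu>"
    using \<mu> k by (simp add: t_def power_divide)
  have "z \<bullet> z = c\<^sup>2 * ((r \<bullet> r) / \<mu>\<^sup>2 + 2 * (t / \<mu>) * (r \<bullet> s) + t\<^sup>2 * (s \<bullet> s))"
    unfolding z_def t_def[symmetric]
    by (simp add: inner_add_left inner_add_right inner_commute[of s r] power2_eq_square algebra_simps)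
  also have "\<dots> = ((r \<bullet> r) / \<mu> + 2 * t * (r \<bullet> s) + k * (s \<bullet> s)) / (1 + \<mu> * k)"
    unfolding c2 t2 using \<mu> pos by (simp add: divide_simps power2_eq_square)
  finally have zz: "z \<bullet> z = ((r \<bullet> r) / \<mu> + 2 * t * (r \<bullet> s) + k * (s \<bullet> s)) / (1 + \<mu> * k)" .
  define E where "E = 1 + \<mu> * k"
  have "E \<noteq> 0" and kE: "k = (E - 1) / \<mu>" using pos \<mu> by (auto simp: E_def)
  have rr: "(sqrt (1 / \<mu> + k) *\<^sub>R r) \<bullet> (sqrt (1 / \<mu> + k) *\<^sub>R r) = E / \<mu> * (r \<bullet> r)"
    using pos \<mu> by (simp add: E_def field_simps)
  have rs: "2 / sqrt \<mu> * sqrt k = 2 * t" by (simp add: t_def)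
  show ?thesis
    unfolding zz rr rs E_def[symmetric] unfolding kE
    using \<mu> \<open>E \<noteq> 0\<close> by (simp add: field_simps power2_eq_square)
qed

lemma TT_eq_inner_diff:
  fixes u :: "nat \<Rightarrow> real ^ 'n"
  assumes "NN q \<mu> 1 \<ge> 0" "NN q \<mu> 2 \<ge> 0"
  defines "y1 \<equiv> (1 / sqrt (NN q \<mu> 1)) *\<^sub>R u (q-1)"
    and "y2 \<equiv> (1 / sqrt (NN q \<mu> 2)) *\<^sub>R u q"
  defines "z \<equiv> xx q \<mu> 1 *\<^sub>R y1 + xx q \<mu> 2 *\<^sub>R y2"
  shows "TT q \<mu> u = (z \<bullet> z - (y1 + y2) \<bullet> (y1 + y2)) / 2"
proof -
  have "y1 \<bullet> y1 = u (q-1) \<bullet> u (q-1) / NN q \<mu> 1" "y2 \<bullet> y2 = u q \<bullet> u q / NN q \<mu> 2"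
    using assms by (simp_all add: y1_def y2_def power2_eq_square[symmetric])
  moreover have "y1 \<bullet> y2 = u q \<bullet> u (q-1) / (sqrt (NN q \<mu> 1) * sqrt (NN q \<mu> 2))"
    by (simp add: y1_def y2_def inner_commute)
  ultimately show ?thesis
    unfolding z_def inner_combination_diff TT_def by (simp add: inner_commute[of "u q" "u (q-1)"])
qed

lemma mm_sum: "mm q \<mu> 1 + mm q \<mu> 2 = \<mu> + 1"
  by (simp add: mm_def lam_def field_simps)

lemma mm_diff: "mm q \<mu> 1 - mm q \<mu> 2 = sqrt (\<mu>\<^sup>2 - (4 / real q - 2) * \<mu> + 1)"
  by (simp add: mm_def lam_def field_simps)

context
  fixes q :: nat and \<mu> :: real
  assumes q_ge_2: "q \<ge> 2" and mu_pos: "\<mu> > 0"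
begin

lemma discriminant_bounds:
  "0 < \<mu>\<^sup>2 - (4 / real q - 2) * \<mu> + 1" "\<mu>\<^sup>2 - (4 / real q - 2) * \<mu> + 1 < (\<mu> + 1)\<^sup>2"
proof -
  have "\<mu>\<^sup>2 - (4 / real q - 2) * \<mu> + 1 = (\<mu> - 1)\<^sup>2 + 4 * \<mu> * (1 - 1 / real q)"
    by (simp add: power2_eq_square algebra_simps)
  moreover have "1 / real q < 1" using q_ge_2 by simp
  ultimately show "0 < \<mu>\<^sup>2 - (4 / real q - 2) * \<mu> + 1"
    using mu_pos by (simp add: add_nonneg_pos)
  have "(\<mu> + 1)\<^sup>2 - (\<mu>\<^sup>2 - (4 / real q - 2) * \<mu> + 1) = 4 * \<mu> / real q"
    by (simp add: power2_eq_square algebra_simps)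
  moreover have "0 < 4 * \<mu> / real q" using mu_pos q_ge_2 by simp
  ultimately show "\<mu>\<^sup>2 - (4 / real q - 2) * \<mu> + 1 < (\<mu> + 1)\<^sup>2"
    by linarith
qed

lemma mm_prod: "mm q \<mu> 1 * mm q \<mu> 2 = \<mu> / real q"
proof -
  have "4 * (mm q \<mu> 1 * mm q \<mu> 2) = (mm q \<mu> 1 + mm q \<mu> 2)\<^sup>2 - (mm q \<mu> 1 - mm q \<mu> 2)\<^sup>2"
    by (simp add: power2_eq_square algebra_simps)
  also have "\<dots> = 4 * \<mu> / real q"
    unfolding mm_sum mm_diff using discriminant_bounds(1) by (simp add: power2_eq_square algebra_simps)
  finally show ?thesis by simp
qed

lemma mm_pos: "0 < mm q \<mu> 1" "0 < mm q \<mu> 2"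
proof -
  have "sqrt (\<mu>\<^sup>2 - (4 / real q - 2) * \<mu> + 1) < \<mu> + 1"
    using discriminant_bounds mu_pos by (intro real_less_lsqrt) auto
  moreover have "0 \<le> sqrt (\<mu>\<^sup>2 - (4 / real q - 2) * \<mu> + 1)"
    using discriminant_bounds(1) by simp
  ultimately show "0 < mm q \<mu> 1" "0 < mm q \<mu> 2"
    using mm_sum[of q \<mu>] mm_diff[of q \<mu>] mu_pos by linarith+
qed

lemma xx_prod: "xx q \<mu> 1 * xx q \<mu> 2 = 1 - real q"
proof -
  have "xx q \<mu> 1 * xx q \<mu> 2
      = 1 - real q * (mm q \<mu> 1 + mm q \<mu> 2) + real q * (real q * (mm q \<mu> 1 * mm q \<mu> 2))"
    by (simp add: xx_def algebra_simps)
  also have "\<dots> = 1 - real q"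
    unfolding mm_sum mm_prod using q_ge_2 by (simp add: algebra_simps)
  finally show ?thesis .
qed

lemma xx_signs: "xx q \<mu> 1 < 0" "0 < xx q \<mu> 2" "xx q \<mu> 2 < 1"
proof -
  show "xx q \<mu> 2 < 1"
    using mm_pos q_ge_2 by (simp add: xx_def)
  have "xx q \<mu> 2 - xx q \<mu> 1 = real q * (mm q \<mu> 1 - mm q \<mu> 2)"
    by (simp add: xx_def algebra_simps)
  moreover have "0 < real q * (mm q \<mu> 1 - mm q \<mu> 2)"
    unfolding mm_diff using discriminant_bounds(1) q_ge_2 by simp
  ultimately have "xx q \<mu> 1 < xx q \<mu> 2"
    by linarith
  moreover have "xx q \<mu> 1 * xx q \<mu> 2 < 0"
    using xx_prod q_ge_2 by simp
  ultimately show "xx q \<mu> 1 < 0" "0 < xx q \<mu> 2"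
    by (auto simp: mult_less_0_iff)
qed

lemma NN_eq: "NN q \<mu> 1 = xx q \<mu> 1 * (xx q \<mu> 1 - xx q \<mu> 2)"
  "NN q \<mu> 2 = xx q \<mu> 2 * (xx q \<mu> 2 - xx q \<mu> 1)"
  using xx_prod by (simp_all add: NN_def power2_eq_square algebra_simps)

lemma NN_pos: "0 < NN q \<mu> 1" "0 < NN q \<mu> 2"
  unfolding NN_eq using xx_signs by (simp_all add: mult_neg_neg)

lemma mu_eq_xx: "\<mu> = (1 - xx q \<mu> 1) * (1 - xx q \<mu> 2) / real q"
proof -
  have "\<mu> = real q * (mm q \<mu> 1 * mm q \<mu> 2)"
    using mm_prod q_ge_2 by simp
  also have "\<dots> = (1 - xx q \<mu> 1) * (1 - xx q \<mu> 2) / real q"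
    using q_ge_2 by (simp add: xx_def field_simps)
  finally show ?thesis .
qed

lemma mm_NN_eq_xx:
  "mm q \<mu> 1 * NN q \<mu> 1 = (1 - xx q \<mu> 1) * xx q \<mu> 1 * (xx q \<mu> 1 - xx q \<mu> 2) / real q"
  "mm q \<mu> 2 * NN q \<mu> 2 = (1 - xx q \<mu> 2) * xx q \<mu> 2 * (xx q \<mu> 2 - xx q \<mu> 1) / real q"
  unfolding NN_eq using q_ge_2 by (simp_all add: xx_def field_simps)

lemma inverse_mm_NN_sum:
  "1 / (mm q \<mu> 1 * NN q \<mu> 1) + 1 / (mm q \<mu> 2 * NN q \<mu> 2) = 1 / \<mu> + real q / (real q - 1)"
proof -
  define a b where "a = xx q \<mu> 1" and "b = xx q \<mu> 2"
  have Q: "real q = 1 - a * b" using xx_prod by (simp add: a_def b_def)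
  have mu: "\<mu> = (1 - a) * (1 - b) / real q" using mu_eq_xx by (simp add: a_def b_def)
  have "a < 0" "0 < b" "b < 1" using xx_signs by (simp_all add: a_def b_def)
  moreover from this have "a * b < 0" by (simp add: mult_neg_pos)
  ultimately have "a \<noteq> 0" "b \<noteq> 0" "1 - a \<noteq> 0" "1 - b \<noteq> 0" "a - b \<noteq> 0" "1 - a * b \<noteq> 0"
    by auto
  then show ?thesis
    unfolding mm_NN_eq_xx a_def[symmetric] b_def[symmetric] unfolding mu Q
    by (simp add: divide_simps) (simp add: algebra_simps)
qed

lemma xx_mm_NN_sum: "xx q \<mu> 1 / (mm q \<mu> 1 * NN q \<mu> 1) + xx q \<mu> 2 / (mm q \<mu> 2 * NN q \<mu> 2) = 1 / \<mu>"
proof -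
  define a b where "a = xx q \<mu> 1" and "b = xx q \<mu> 2"
  have mu: "\<mu> = (1 - a) * (1 - b) / real q" using mu_eq_xx by (simp add: a_def b_def)
  have "a < 0" "0 < b" "b < 1" using xx_signs by (simp_all add: a_def b_def)
  then have "a \<noteq> 0" "b \<noteq> 0" "1 - a \<noteq> 0" "1 - b \<noteq> 0" "a - b \<noteq> 0" "b - a \<noteq> 0" "real q \<noteq> 0"
    using q_ge_2 by auto
  then show ?thesis
    unfolding mm_NN_eq_xx a_def[symmetric] b_def[symmetric] unfolding mu
    by (simp add: divide_simps) (simp add: algebra_simps)
qed

lemma xx_diff_div_sqrt_mm_NN:
  "(xx q \<mu> 2 - xx q \<mu> 1) / (sqrt (mm q \<mu> 1 * NN q \<mu> 1) * sqrt (mm q \<mu> 2 * NN q \<mu> 2))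
    = sqrt (real q / (real q - 1)) / sqrt \<mu>"
proof -
  define a b where "a = xx q \<mu> 1" and "b = xx q \<mu> 2"
  define k where "k = real q / (real q - 1)"
  have "a < b" using xx_signs by (simp add: a_def b_def)
  have "mm q \<mu> 1 * NN q \<mu> 1 * (mm q \<mu> 2 * NN q \<mu> 2)
      = (1 - a) * (1 - b) / real q * (- (a * b)) * (b - a)\<^sup>2 / real q"
    unfolding mm_NN_eq_xx a_def[symmetric] b_def[symmetric] by (simp add: power2_eq_square algebra_simps)
  also have "\<dots> = \<mu> * (real q - 1) * (b - a)\<^sup>2 / real q"
    using xx_prod mu_eq_xx by (simp add: a_def b_def)
  also have "\<dots> = (b - a)\<^sup>2 * (\<mu> / k)"
    using q_ge_2 by (simp add: k_def)
  finally have "sqrt (mm q \<mu> 1 * NN q \<mu> 1) * sqrt (mm q \<mu> 2 * NN q \<mu> 2) = sqrt ((b - a)\<^sup>2 * (\<mu> / k))"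
    by (simp only: real_sqrt_mult[symmetric])
  also have "\<dots> = (b - a) * sqrt (\<mu> / k)"
    using \<open>a < b\<close> by (simp only: real_sqrt_mult real_sqrt_abs abs_of_pos diff_gt_0_iff_gt)
  finally have "(b - a) / (sqrt (mm q \<mu> 1 * NN q \<mu> 1) * sqrt (mm q \<mu> 2 * NN q \<mu> 2)) = 1 / sqrt (\<mu> / k)"
    using \<open>a < b\<close> by simp
  also have "\<dots> = sqrt k / sqrt \<mu>"
    by (simp add: real_sqrt_divide)
  finally show ?thesis
    unfolding a_def b_def k_def .
qed

lemma W_div_sqrt_mm_NN:
  "W11 q \<mu> / (sqrt (mm q \<mu> 2) * sqrt (NN q \<mu> 2)) = cW q \<mu> / (mm q \<mu> 2 * NN q \<mu> 2)"
  "W12 q \<mu> / (sqrt (mm q \<mu> 2) * sqrt (NN q \<mu> 2))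
    = cW q \<mu> / (sqrt (mm q \<mu> 1 * NN q \<mu> 1) * sqrt (mm q \<mu> 2 * NN q \<mu> 2))"
  "W21 q \<mu> / (sqrt (mm q \<mu> 1) * sqrt (NN q \<mu> 1)) = cW q \<mu> / (mm q \<mu> 1 * NN q \<mu> 1)"
  "W22 q \<mu> / (sqrt (mm q \<mu> 1) * sqrt (NN q \<mu> 1))
    = - cW q \<mu> / (sqrt (mm q \<mu> 1 * NN q \<mu> 1) * sqrt (mm q \<mu> 2 * NN q \<mu> 2))"
  using mm_pos NN_pos
  by (simp_all add: W11_def W12_def W21_def W22_def real_sqrt_mult field_simps)

context
  fixes u :: "nat \<Rightarrow> real ^ 'n" and r s :: "real ^ 'n"
  assumes u_q: "u q = (1 / sqrt (mm q \<mu> 2)) *\<^sub>R (W11 q \<mu> *\<^sub>R r + W12 q \<mu> *\<^sub>R s)"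
    and u_q_minus_1: "u (q-1) = (1 / sqrt (mm q \<mu> 1)) *\<^sub>R (W21 q \<mu> *\<^sub>R r + W22 q \<mu> *\<^sub>R s)"
begin

lemma scaled_u_eq:
  defines "P \<equiv> sqrt (mm q \<mu> 1 * NN q \<mu> 1) * sqrt (mm q \<mu> 2 * NN q \<mu> 2)"
  shows "(1 / sqrt (NN q \<mu> 1)) *\<^sub>R u (q-1)
      = (cW q \<mu> / (mm q \<mu> 1 * NN q \<mu> 1)) *\<^sub>R r - (cW q \<mu> / P) *\<^sub>R s"
    and "(1 / sqrt (NN q \<mu> 2)) *\<^sub>R u q
      = (cW q \<mu> / (mm q \<mu> 2 * NN q \<mu> 2)) *\<^sub>R r + (cW q \<mu> / P) *\<^sub>R s"
proof -
  have "(1 / sqrt (NN q \<mu> 1)) *\<^sub>R u (q-1)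
      = (W21 q \<mu> / (sqrt (mm q \<mu> 1) * sqrt (NN q \<mu> 1))) *\<^sub>R r
      + (W22 q \<mu> / (sqrt (mm q \<mu> 1) * sqrt (NN q \<mu> 1))) *\<^sub>R s"
    unfolding u_q_minus_1 by (simp add: scaleR_add_right mult.commute)
  then show "(1 / sqrt (NN q \<mu> 1)) *\<^sub>R u (q-1)
      = (cW q \<mu> / (mm q \<mu> 1 * NN q \<mu> 1)) *\<^sub>R r - (cW q \<mu> / P) *\<^sub>R s"
    unfolding W_div_sqrt_mm_NN P_def by simp
  have "(1 / sqrt (NN q \<mu> 2)) *\<^sub>R u q
      = (W11 q \<mu> / (sqrt (mm q \<mu> 2) * sqrt (NN q \<mu> 2))) *\<^sub>R r
      + (W12 q \<mu> / (sqrt (mm q \<mu> 2) * sqrt (NN q \<mu> 2))) *\<^sub>R s"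
    unfolding u_q by (simp add: scaleR_add_right mult.commute)
  then show "(1 / sqrt (NN q \<mu> 2)) *\<^sub>R u q
      = (cW q \<mu> / (mm q \<mu> 2 * NN q \<mu> 2)) *\<^sub>R r + (cW q \<mu> / P) *\<^sub>R s"
    unfolding W_div_sqrt_mm_NN P_def .
qed

lemma scaled_u_sum:
  "(1 / sqrt (NN q \<mu> 1)) *\<^sub>R u (q-1) + (1 / sqrt (NN q \<mu> 2)) *\<^sub>R u q
    = sqrt (1 / \<mu> + real q / (real q - 1)) *\<^sub>R r"
proof -
  have pos: "0 < 1 / \<mu> + real q / (real q - 1)"
    using q_ge_2 mu_pos by (simp add: add_pos_pos)
  have "(1 / sqrt (NN q \<mu> 1)) *\<^sub>R u (q-1) + (1 / sqrt (NN q \<mu> 2)) *\<^sub>R u q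
      = (cW q \<mu> * (1 / (mm q \<mu> 1 * NN q \<mu> 1) + 1 / (mm q \<mu> 2 * NN q \<mu> 2))) *\<^sub>R r"
    unfolding scaled_u_eq by (simp add: distrib_left scaleR_add_left)
  also have "\<dots> = sqrt (1 / \<mu> + real q / (real q - 1)) *\<^sub>R r"
    unfolding inverse_mm_NN_sum cW_def using pos by (simp add: real_div_sqrt)
  finally show ?thesis .
qed

lemma scaled_u_xx_combination:
  "xx q \<mu> 1 *\<^sub>R ((1 / sqrt (NN q \<mu> 1)) *\<^sub>R u (q-1)) + xx q \<mu> 2 *\<^sub>R ((1 / sqrt (NN q \<mu> 2)) *\<^sub>R u q)
    = cW q \<mu> *\<^sub>R ((1 / \<mu>) *\<^sub>R r + (sqrt (real q / (real q - 1)) / sqrt \<mu>) *\<^sub>R s)"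
proof -
  have "xx q \<mu> 1 *\<^sub>R ((1 / sqrt (NN q \<mu> 1)) *\<^sub>R u (q-1)) + xx q \<mu> 2 *\<^sub>R ((1 / sqrt (NN q \<mu> 2)) *\<^sub>R u q)
      = cW q \<mu> *\<^sub>R ((xx q \<mu> 1 / (mm q \<mu> 1 * NN q \<mu> 1) + xx q \<mu> 2 / (mm q \<mu> 2 * NN q \<mu> 2)) *\<^sub>R r
        + ((xx q \<mu> 2 - xx q \<mu> 1) / (sqrt (mm q \<mu> 1 * NN q \<mu> 1) * sqrt (mm q \<mu> 2 * NN q \<mu> 2))) *\<^sub>R s)"
    unfolding scaled_u_eq by (simp add: algebra_simps scaleR_add_left diff_divide_distrib)
  then show ?thesis
    unfolding xx_mm_NN_sum xx_diff_div_sqrt_mm_NN .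
qed

end

end

theorem corollary3:
  fixes q :: nat and \<mu> :: real
    and u :: "nat \<Rightarrow> real ^ 'n" and r s :: "real ^ 'n"
  assumes hq: "q \<ge> 2" and hmu: "\<mu> > 0"
    and huq: "u q = (1 / sqrt (mm q \<mu> 2)) *\<^sub>R (W11 q \<mu> *\<^sub>R r + W12 q \<mu> *\<^sub>R s)"
    and huq1: "u (q-1) = (1 / sqrt (mm q \<mu> 1)) *\<^sub>R (W21 q \<mu> *\<^sub>R r + W22 q \<mu> *\<^sub>R s)"
  defines "w \<equiv> (\<lambda>l. \<Sum>m = 1..q-2. alpha m l *\<^sub>R u m)"
  shows "(\<forall>l \<in> {1..q}. GG q \<mu> u l =
            w l \<bullet> w l + 2 * sqrt (1/\<mu> + real q / (real q - 1)) * (w l \<bullet> r))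
       \<and> TT q \<mu> u =
           (1/2) * inverse (1 + \<mu> * (real q / (real q - 1))) *
           (- (real q / (real q - 1)) * (2 + \<mu> * (real q / (real q - 1))) * (r \<bullet> r)
            + (real q / (real q - 1)) * (s \<bullet> s)
            + 2 / sqrt \<mu> * sqrt (real q / (real q - 1)) * (r \<bullet> s))"
proof -
  define k where "k = real q / (real q - 1)"
  note sum = scaled_u_sum[OF hq hmu huq huq1, folded k_def]
  note combination = scaled_u_xx_combination[OF hq hmu huq huq1, folded k_def]
  have G: "GG q \<mu> u l = w l \<bullet> w l + 2 * sqrt (1/\<mu> + k) * (w l \<bullet> r)" for l
    using GG_eq_inner[where q = q and l = l and u = u and \<mu> = \<mu>] unfolding sum by (simp add: w_def)
  have "TT q \<mu> u = ((cW q \<mu> *\<^sub>R ((1 / \<mu>) *\<^sub>R r + (sqrt k / sqrt \<mu>) *\<^sub>R s))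
        \<bullet> (cW q \<mu> *\<^sub>R ((1 / \<mu>) *\<^sub>R r + (sqrt k / sqrt \<mu>) *\<^sub>R s))
      - (sqrt (1 / \<mu> + k) *\<^sub>R r) \<bullet> (sqrt (1 / \<mu> + k) *\<^sub>R r)) / 2"
    using TT_eq_inner_diff[where q = q and \<mu> = \<mu> and u = u] NN_pos[OF hq hmu]
    unfolding combination sum by simp
  also have "\<dots> = (1/2) * inverse (1 + \<mu> * k) *
      (- k * (2 + \<mu> * k) * (r \<bullet> r) + k * (s \<bullet> s) + 2 / sqrt \<mu> * sqrt k * (r \<bullet> s))"
    unfolding cW_def k_def[symmetric]
    by (rule quadratic_form_coefficients) (use hq hmu in \<open>simp_all add: k_def\<close>)
  finally show ?thesis
    using G unfolding k_def by simp
qed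

end
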